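(* Let $N,K$ be positive integers with $K\le\min(N,D_d)$ and let $\Phi_t=t\,\mathrm{id}+(1-t)\Delta$ on $\mathcal L(\mathbb C^d)$. If $t>1/\sqrt K$, then the $N$-tuple $(\Phi_t,\dots,\Phi_t)$ consisting of $N$ copies of $\Phi_t$ is $(N,K)$-strongly incompatible (in particular $(N,K)$-incompatible).
   Context: $\mathrm{id}(X)=X$, $\Delta(X)=(\operatorname{Tr}X)I/d$. $D_d$ is the maximal number of mutually unbiased orthonormal bases of $\mathbb C^d$. A family of channels is compatible if there is a channel into the tensor product of the output spaces whose marginals are the given channels. An $N$-tuple of channels is $(N,K)$-incompatible if at least one $K$-element subfamily is incompatible, and $(N,K)$-strongly incompatible if every $K$-element subfamily is incompatible. *)

theory Defs
  imports "Jordan_Normal_Form.Matrix"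
begin

definition cinner :: "nat \<Rightarrow> complex vec \<Rightarrow> complex vec \<Rightarrow> complex" where
  "cinner n u v = (\<Sum>i<n. cnj (u $ i) * v $ i)"

definition mtrace :: "nat \<Rightarrow> complex mat \<Rightarrow> complex" where
  "mtrace n A = (\<Sum>i<n. A $$ (i, i))"

definition psd :: "nat \<Rightarrow> complex mat \<Rightarrow> bool" where
  "psd n A \<longleftrightarrow> A \<in> carrier_mat n n \<and>
     (\<forall>v \<in> carrier_vec n. cinner n v (A *\<^sub>v v) \<in> \<real> \<and> Re (cinner n v (A *\<^sub>v v)) \<ge> 0)"

text \<open>(id_k \<otimes> Phi)(X), for X a (k*n) x (k*n) matrix seen as a k x k block matrix
  of n x n blocks (row index a*n + r); the result is a (k*m) x (k*m) block matrix.\<close>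
definition id_tensor :: "nat \<Rightarrow> nat \<Rightarrow> nat \<Rightarrow> (complex mat \<Rightarrow> complex mat) \<Rightarrow> complex mat \<Rightarrow> complex mat" where
  "id_tensor k n m Phi X = mat (k * m) (k * m) (\<lambda>(i, j).
      Phi (mat n n (\<lambda>(r, s). X $$ ((i div m) * n + r, (j div m) * n + s))) $$ (i mod m, j mod m))"

definition channel :: "nat \<Rightarrow> nat \<Rightarrow> (complex mat \<Rightarrow> complex mat) \<Rightarrow> bool" where
  "channel n m Phi \<longleftrightarrow>
     (\<forall>X \<in> carrier_mat n n. Phi X \<in> carrier_mat m m) \<and>
     (\<forall>X \<in> carrier_mat n n. \<forall>Y \<in> carrier_mat n n. Phi (X + Y) = Phi X + Phi Y) \<and>
     (\<forall>c. \<forall>X \<in> carrier_mat n n. Phi (c \<cdot>\<^sub>m X) = c \<cdot>\<^sub>m Phi X) \<and>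
     (\<forall>k. \<forall>X. psd (k * n) X \<longrightarrow> psd (k * m) (id_tensor k n m Phi X)) \<and>
     (\<forall>X \<in> carrier_mat n n. mtrace m (Phi X) = mtrace n X)"

text \<open>Basis index i < d^K of (C^d)^{\<otimes>K} has digit l (tensor factor l) equal to
  (i div d^l) mod d.\<close>
definition digit :: "nat \<Rightarrow> nat \<Rightarrow> nat \<Rightarrow> nat" where
  "digit d l i = (i div d ^ l) mod d"

text \<open>Partial trace over all tensor factors except factor j.\<close>
definition marginal :: "nat \<Rightarrow> nat \<Rightarrow> nat \<Rightarrow> complex mat \<Rightarrow> complex mat" where
  "marginal d K j X = mat d d (\<lambda>(r, s).
      \<Sum>i \<in> {i. i < d ^ K \<and> digit d j i = r}. X $$ (i, i - r * d ^ j + s * d ^ j))"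

text \<open>Compatibility of the subfamily (Phi i)_{i \<in> S} of channels on L(C^d): there is a
  channel into the tensor product of |S| copies of C^d whose marginals are the Phi i
  (the elements of S being attached to the tensor factors in increasing order).\<close>
definition compatible :: "nat \<Rightarrow> (nat \<Rightarrow> complex mat \<Rightarrow> complex mat) \<Rightarrow> nat set \<Rightarrow> bool" where
  "compatible d Phi S \<longleftrightarrow>
     (\<exists>Psi. channel d (d ^ card S) Psi \<and>
        (\<forall>j < card S. \<forall>X \<in> carrier_mat d d.
            marginal d (card S) j (Psi X) = Phi (sorted_list_of_set S ! j) X))"

definition NK_incompatible :: "nat \<Rightarrow> nat \<Rightarrow> nat \<Rightarrow> (nat \<Rightarrow> complex mat \<Rightarrow> complex mat) \<Rightarrow> bool" where
  "NK_incompatible d N K Phi \<longleftrightarrow>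
     (\<exists>S. S \<subseteq> {..<N} \<and> card S = K \<and> \<not> compatible d Phi S)"

definition NK_strongly_incompatible :: "nat \<Rightarrow> nat \<Rightarrow> nat \<Rightarrow> (nat \<Rightarrow> complex mat \<Rightarrow> complex mat) \<Rightarrow> bool" where
  "NK_strongly_incompatible d N K Phi \<longleftrightarrow>
     (\<forall>S. S \<subseteq> {..<N} \<and> card S = K \<longrightarrow> \<not> compatible d Phi S)"

definition orthonormal_basis :: "nat \<Rightarrow> (nat \<Rightarrow> complex vec) \<Rightarrow> bool" where
  "orthonormal_basis d b \<longleftrightarrow> (\<forall>k < d. b k \<in> carrier_vec d) \<and>
     (\<forall>k < d. \<forall>l < d. cinner d (b k) (b l) = (if k = l then 1 else 0))"

definition MUB_family :: "nat \<Rightarrow> nat \<Rightarrow> (nat \<Rightarrow> nat \<Rightarrow> complex vec) \<Rightarrow> bool" where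
  "MUB_family d m B \<longleftrightarrow> (\<forall>i < m. orthonormal_basis d (B i)) \<and>
     (\<forall>i < m. \<forall>j < m. i \<noteq> j \<longrightarrow>
        (\<forall>k < d. \<forall>l < d. (cmod (cinner d (B i k) (B j l)))\<^sup>2 = 1 / real d))"

definition max_MUB :: "nat \<Rightarrow> nat" where
  "max_MUB d = (GREATEST m. \<exists>B. MUB_family d m B)"

definition Phi_t :: "nat \<Rightarrow> real \<Rightarrow> complex mat \<Rightarrow> complex mat" where
  "Phi_t d t X = complex_of_real t \<cdot>\<^sub>m X +
     (complex_of_real (1 - t) * mtrace d X / of_nat d) \<cdot>\<^sub>m one_mat d"

end

theory Submission
  imports Defs "Jordan_Normal_Form.Determinant" "HOL-Analysis.Convex"
begin

(* Suppose a channel \<Psi> into the K-fold tensor power of C^d has all K marginals equal to \<Phi>_t,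
   and let B_0, ..., B_(K-1) be mutually unbiased bases.  For pairwise unbiased unit vectors
   u_0, ..., u_(K-1), the traceless parts of the projections onto the u_j are orthogonal in the
   Hilbert-Schmidt inner product, and Cauchy-Schwarz gives
   sum_j |<u_j, v>|^2 <= c |v|^2  with  c = (K + sqrt K (d - 1)) / d,
   i.e. c I - sum_j |u_j><u_j| is positive.  Apply \<Psi> to this operator for u_j = B_j(i_j) and
   evaluate it at the product vector B_0(i_0) \<otimes> ... \<otimes> B_(K-1)(i_(K-1)).  Summed over all
   digit strings i, the identity term gives c tr \<Psi>(I) = c d, and by the marginal conditions
   each projection term gives sum_k <b_k, \<Phi>_t(|b_k><b_k|) b_k> = d t + 1 - t.  Positivity yields
   c d >= K (d t + 1 - t), which is t <= 1 / sqrt K.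
   The same orthogonality shows that at most d^2 bases are mutually unbiased, so the maximum D_d
   is attained and K <= D_d provides K mutually unbiased bases. *)

section \<open>Base-d digits\<close>

lemma digit_0: "digit d 0 x = x mod d"
  by (simp add: digit_def)

lemma digit_Suc: "digit d (Suc l) x = digit d l (x div d)"
  by (simp add: digit_def div_mult2_eq mult.commute)

lemma digit_less: "0 < d \<Longrightarrow> digit d l x < d"
  by (simp add: digit_def)

lemma eq_if_digits_eq:
  assumes "0 < d" and "x < d ^ K" and "y < d ^ K"
    and "\<And>l. l < K \<Longrightarrow> digit d l x = digit d l y"
  shows "x = y"
  using assms(2-)
proof (induction K arbitrary: x y)
  case (Suc K)
  have "x div d < d ^ K" "y div d < d ^ K"
    using Suc.prems(1,2) by (simp_all add: less_mult_imp_div_less mult.commute)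
  moreover have "digit d l (x div d) = digit d l (y div d)" if "l < K" for l
    using Suc.prems(3)[of "Suc l"] that by (simp add: digit_Suc)
  ultimately have "x div d = y div d"
    using Suc.IH by blast
  moreover have "x mod d = y mod d"
    using Suc.prems(3)[of 0] by (simp add: digit_0)
  ultimately show ?case
    by (metis div_mult_mod_eq)
qed simp

lemma sum_lessThan_mult:
  fixes F :: "nat \<Rightarrow> 'a::comm_monoid_add"
  shows "(\<Sum>i<m * d. F i) = (\<Sum>b<m. \<Sum>a<d. F (b * d + a))"
proof -
  have "(\<Sum>i\<in>{b * d..<b * d + d}. F i) = (\<Sum>a<d. F (b * d + a))" for b
    using sum.shift_bounds_nat_ivl[of F 0 "b * d" d] by (simp add: atLeast0LessThan add.commute)
  then show ?thesis
    by (simp add: sum.nat_group[symmetric])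
qed

lemma sum_prod_digits:
  fixes g :: "nat \<Rightarrow> nat \<Rightarrow> 'a::comm_semiring_1"
  shows "(\<Sum>i<d ^ K. \<Prod>l<K. g l (digit d l i)) = (\<Prod>l<K. \<Sum>k<d. g l k)"
proof (induction K arbitrary: g)
  case (Suc K)
  have digits: "digit d 0 (b * d + a) = a" "digit d (Suc l) (b * d + a) = digit d l b"
    if "a < d" for a b l
    using that by (simp_all add: digit_0 digit_Suc)
  have "(\<Sum>i<d ^ Suc K. \<Prod>l<Suc K. g l (digit d l i))
      = (\<Sum>b<d ^ K. \<Sum>a<d. g 0 a * (\<Prod>l<K. g (Suc l) (digit d l b)))"
    unfolding power_Suc2 sum_lessThan_mult prod.lessThan_Suc_shift
    by (intro sum.cong refl) (simp add: digits)
  also have "\<dots> = (\<Sum>a<d. g 0 a) * (\<Prod>l<K. \<Sum>k<d. g (Suc l) k)"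
    using Suc.IH[of "\<lambda>l. g (Suc l)"] by (subst sum.swap) (simp add: sum_distrib_left[symmetric] sum_distrib_right)
  finally show ?case
    by (simp only: prod.lessThan_Suc_shift)
qed simp

lemma sum_digit_fibres:
  fixes F :: "nat \<Rightarrow> nat \<Rightarrow> 'a::comm_monoid_add"
  assumes "0 < d"
  shows "(\<Sum>r<d. \<Sum>i\<in>{i. i < n \<and> digit d j i = r}. F i r) = (\<Sum>i<n. F i (digit d j i))"
proof -
  have "(\<Sum>i\<in>{i. i < n \<and> digit d j i = r}. F i r) = (\<Sum>i\<in>{i. i < n \<and> digit d j i = r}. F i (digit d j i))"
    for r by (rule sum.cong) auto
  moreover have "digit d j ` {..<n} \<subseteq> {..<d}"
    using digit_less[OF assms] by auto
  ultimately show ?thesis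
    using sum.group[of "{..<n}" "{..<d}" "digit d j" "\<lambda>i. F i (digit d j i)"] by simp
qed

lemma digit_add_mult_power:
  assumes "0 < d" and "x < d ^ j"
  shows "digit d l (x + d ^ j * m) = (if l < j then digit d l x else digit d (l - j) m)"
proof (cases "l < j")
  case True
  then have "d ^ j = d ^ l * (d * d ^ (j - l - 1))"
    by (simp flip: power_add power_Suc)
  then have "(x + d ^ j * m) div d ^ l = x div d ^ l + d * (d ^ (j - l - 1) * m)"
    using assms(1) by (simp add: mult.assoc)
  then show ?thesis
    using True by (simp add: digit_def)
next
  case False
  then have "d ^ l = d ^ j * d ^ (l - j)"
    by (simp flip: power_add)
  moreover have "(x + d ^ j * m) div d ^ j = m"
    using assms by simp
  ultimately show ?thesis
    using False by (simp add: digit_def div_mult2_eq)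
qed

(* The column index in the definition of marginal: p with its j-th digit replaced by s. *)
definition digit_update :: "nat \<Rightarrow> nat \<Rightarrow> nat \<Rightarrow> nat \<Rightarrow> nat" where
  "digit_update d j p s = p - digit d j p * d ^ j + s * d ^ j"

lemma digit_decomp: "p = p mod d ^ j + d ^ j * (digit d j p + d * (p div d ^ Suc j))"
proof -
  have "p div d ^ Suc j = p div d ^ j div d"
    by (simp only: power_Suc2 div_mult2_eq)
  then have "p div d ^ j = digit d j p + d * (p div d ^ Suc j)"
    by (simp add: digit_def)
  then show ?thesis
    by (metis mod_div_mult_eq mult.commute add.commute)
qed

lemma digit_update_eq:
  "digit_update d j p s = p mod d ^ j + d ^ j * (s + d * (p div d ^ Suc j))"
proof -
  have "p - digit d j p * d ^ j = p mod d ^ j + d ^ j * (d * (p div d ^ Suc j))"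
    by (subst digit_decomp[of p d j]) (simp add: algebra_simps)
  then show ?thesis
    by (simp add: digit_update_def algebra_simps)
qed

lemma digit_digit_update:
  assumes "0 < d" and "s < d"
  shows "digit d l (digit_update d j p s) = (if l = j then s else digit d l p)"
proof -
  let ?lo = "p mod d ^ j" and ?hi = "p div d ^ Suc j"
  have digits: "digit d l (?lo + d ^ j * (a + d * ?hi))
      = (if l < j then digit d l ?lo else if l = j then a else digit d (l - Suc j) ?hi)"
    if "a < d" for a
  proof -
    consider "l < j" | "l = j" | i where "l - j = Suc i" "l - Suc j = i"
      by (metis Suc_diff_Suc diff_diff_cancel less_imp_le_nat linorder_neqE_nat zero_less_diff)
    then show ?thesis
      using digit_add_mult_power[OF assms(1), of ?lo j l] that assms(1)
      by cases (auto simp: digit_0 digit_Suc)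
  qed
  show ?thesis
    using digits[OF assms(2)] digits[OF digit_less[OF assms(1)], of j p] digit_decomp[of p d j]
    by (simp add: digit_update_eq)
qed

lemma digit_update_less:
  assumes "0 < d" and "s < d" and "p < d ^ K" and "j < K"
  shows "digit_update d j p s < d ^ K"
proof -
  have K: "d ^ K = d ^ (K - Suc j) * d ^ Suc j"
    by (metis assms(4) Suc_leI le_add_diff_inverse2 power_add)
  have "p mod d ^ j + d ^ j * s < d ^ Suc j"
  proof -
    have "p mod d ^ j + d ^ j * s < d ^ j * Suc s"
      using assms(1) by simp
    also have "\<dots> \<le> d ^ Suc j"
      using assms(2) by (simp add: power_Suc2 del: mult_Suc_right)
    finally show ?thesis .
  qed
  moreover have "digit_update d j p s = (p mod d ^ j + d ^ j * s) + p div d ^ Suc j * d ^ Suc j"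
    by (simp add: digit_update_eq algebra_simps)
  ultimately have "digit_update d j p s div d ^ Suc j = p div d ^ Suc j"
    using assms(1) by (simp del: power_Suc)
  moreover have "p div d ^ Suc j < d ^ (K - Suc j)"
    using assms(1,3) K by (simp add: div_less_iff_less_mult)
  ultimately show ?thesis
    using assms(1) K by (metis div_less_iff_less_mult zero_less_power)
qed

lemma digit_update_digit: "digit_update d j p (digit d j p) = p"
proof -
  have "digit d j p * d ^ j \<le> p div d ^ j * d ^ j"
    by (simp add: digit_def)
  also have "\<dots> \<le> p"
    by (rule div_times_less_eq_dividend)
  finally show ?thesis
    by (simp add: digit_update_def)
qed

lemma eq_digit_update:
  assumes "0 < d" and "p < d ^ K" and "q < d ^ K" and "j < K"
    and "\<And>l. l < K \<Longrightarrow> l \<noteq> j \<Longrightarrow> digit d l q = digit d l p"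
  shows "q = digit_update d j p (digit d j q)"
  using assms digit_update_less[OF assms(1) digit_less[OF assms(1)]]
  by (intro eq_if_digits_eq[OF assms(1,3)]) (auto simp: digit_digit_update digit_less)

section \<open>The l2 inner product on a finite index set\<close>

definition l2_inner :: "'x set \<Rightarrow> ('x \<Rightarrow> complex) \<Rightarrow> ('x \<Rightarrow> complex) \<Rightarrow> complex" where
  "l2_inner I F G = (\<Sum>x\<in>I. cnj (F x) * G x)"

lemma cinner_eq_l2_inner: "cinner n u v = l2_inner {..<n} (($) u) (($) v)"
  by (simp add: cinner_def l2_inner_def)

lemma l2_inner_self: "l2_inner I F F = of_real (\<Sum>x\<in>I. (cmod (F x))\<^sup>2)"
  unfolding l2_inner_def of_real_sum
  by (intro sum.cong refl) (simp only: complex_norm_square mult.commute)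

lemma l2_inner_sum_left: "l2_inner I (\<lambda>x. \<Sum>j\<in>J. F j x) G = (\<Sum>j\<in>J. l2_inner I (F j) G)"
  by (simp add: l2_inner_def sum_distrib_right sum.swap[of _ J I] cnj_sum)

lemma l2_inner_sum_right: "l2_inner I F (\<lambda>x. \<Sum>j\<in>J. G j x) = (\<Sum>j\<in>J. l2_inner I F (G j))"
  by (simp add: l2_inner_def sum_distrib_left sum.swap[of _ J I])

lemma l2_inner_scale_left: "l2_inner I (\<lambda>x. c * F x) G = cnj c * l2_inner I F G"
  by (simp add: l2_inner_def sum_distrib_left algebra_simps)

lemma l2_inner_scale_right: "l2_inner I F (\<lambda>x. c * G x) = c * l2_inner I F G"
  by (simp add: l2_inner_def sum_distrib_left algebra_simps)

lemma l2_inner_Cauchy_Schwarz: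
  "(cmod (l2_inner I F G))\<^sup>2 \<le> (\<Sum>x\<in>I. (cmod (F x))\<^sup>2) * (\<Sum>x\<in>I. (cmod (G x))\<^sup>2)"
proof -
  have "cmod (l2_inner I F G) \<le> (\<Sum>x\<in>I. cmod (F x) * cmod (G x))"
    unfolding l2_inner_def by (rule order_trans[OF norm_sum]) (simp add: norm_mult)
  then have "(cmod (l2_inner I F G))\<^sup>2 \<le> (\<Sum>x\<in>I. cmod (F x) * cmod (G x))\<^sup>2"
    by (simp add: power_mono)
  also have "\<dots> \<le> (\<Sum>x\<in>I. (cmod (F x))\<^sup>2) * (\<Sum>x\<in>I. (cmod (G x))\<^sup>2)"
    by (rule Cauchy_Schwarz_ineq_sum)
  finally show ?thesis .
qed

lemma l2_Bessel_inequality: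
  fixes F :: "nat \<Rightarrow> 'x \<Rightarrow> complex"
  assumes "0 < \<alpha>"
    and orth: "\<And>i j. i < m \<Longrightarrow> j < m \<Longrightarrow> l2_inner I (F i) (F j) = (if i = j then of_real \<alpha> else 0)"
  shows "(\<Sum>i<m. (cmod (l2_inner I (F i) w))\<^sup>2) \<le> \<alpha> * (\<Sum>x\<in>I. (cmod (w x))\<^sup>2)"
proof -
  define c where "c i = l2_inner I (F i) w" for i
  define S where "S = (\<Sum>i<m. (cmod (c i))\<^sup>2)"
  define z where "z x = (\<Sum>i<m. c i * F i x)" for x
  have zw: "l2_inner I z w = of_real S"
    unfolding z_def l2_inner_sum_left l2_inner_scale_left S_def of_real_sum c_def[symmetric]
    by (intro sum.cong refl) (simp only: complex_norm_square mult.commute)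
  have "l2_inner I z z = of_real (\<alpha> * S)"
  proof -
    have "l2_inner I z z = (\<Sum>i<m. \<Sum>j<m. cnj (c i) * (c j * l2_inner I (F i) (F j)))"
      unfolding z_def l2_inner_sum_left l2_inner_sum_right l2_inner_scale_left l2_inner_scale_right
      by (simp add: sum_distrib_left)
    also have "\<dots> = (\<Sum>i<m. \<Sum>j<m. if i = j then of_real \<alpha> * (cnj (c i) * c j) else 0)"
      by (intro sum.cong refl) (simp add: orth mult_ac)
    also have "\<dots> = (\<Sum>i<m. of_real \<alpha> * (cnj (c i) * c i))"
      by simp
    also have "\<dots> = of_real (\<alpha> * S)"
      unfolding S_def of_real_mult of_real_sum sum_distrib_left
      by (intro sum.cong refl) (simp only: complex_norm_square mult.commute)
    finally show ?thesis .
  qed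
  then have "(\<Sum>x\<in>I. (cmod (z x))\<^sup>2) = \<alpha> * S"
    using l2_inner_self[of I z] by (metis of_real_eq_iff)
  then have "S\<^sup>2 \<le> (\<alpha> * S) * (\<Sum>x\<in>I. (cmod (w x))\<^sup>2)"
    using l2_inner_Cauchy_Schwarz[of I z w] zw by simp
  moreover have "0 \<le> S"
    by (simp add: S_def sum_nonneg)
  ultimately have "S \<le> \<alpha> * (\<Sum>x\<in>I. (cmod (w x))\<^sup>2)"
    using \<open>0 < \<alpha>\<close> by (cases "S = 0") (auto simp: power2_eq_square mult.assoc sum_nonneg)
  then show ?thesis
    by (simp add: S_def c_def)
qed

lemma l2_orthogonal_family_card_le:
  fixes F :: "nat \<Rightarrow> 'x \<Rightarrow> complex"
  assumes "finite I" and "0 < \<alpha>"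
    and orth: "\<And>i j. i < m \<Longrightarrow> j < m \<Longrightarrow> l2_inner I (F i) (F j) = (if i = j then of_real \<alpha> else 0)"
  shows "m \<le> card I"
proof -
  have pointwise: "(\<Sum>i<m. (cmod (F i x))\<^sup>2) \<le> \<alpha>" if "x \<in> I" for x
  proof -
    define w where "w y = (if y = x then 1 else 0 :: complex)" for y
    have "l2_inner I (F i) w = cnj (F i x)" for i
      using that \<open>finite I\<close> by (simp add: l2_inner_def w_def if_distrib[of "\<lambda>z. _ * z"] cong: if_cong)
    moreover have "(\<Sum>y\<in>I. (cmod (w y))\<^sup>2) = 1"
      using that \<open>finite I\<close> by (simp add: w_def if_distrib[of "\<lambda>z. (cmod z)\<^sup>2"] cong: if_cong)
    moreover have "(\<Sum>i<m. (cmod (l2_inner I (F i) w))\<^sup>2) \<le> \<alpha> * (\<Sum>y\<in>I. (cmod (w y))\<^sup>2)"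
      by (rule l2_Bessel_inequality[OF assms(2)]) (rule orth)
    ultimately show ?thesis
      by simp
  qed
  have norms: "(\<Sum>x\<in>I. (cmod (F i x))\<^sup>2) = \<alpha>" if "i < m" for i
    using orth[OF that that] l2_inner_self[of I "F i"] by (metis of_real_eq_iff)
  have "real m * \<alpha> = (\<Sum>i<m. \<Sum>x\<in>I. (cmod (F i x))\<^sup>2)"
    using norms by simp
  also have "\<dots> = (\<Sum>x\<in>I. \<Sum>i<m. (cmod (F i x))\<^sup>2)"
    by (rule sum.swap)
  also have "\<dots> \<le> real (card I) * \<alpha>"
    using sum_mono[OF pointwise] by simp
  finally show ?thesis
    using \<open>0 < \<alpha>\<close> by simp
qed

section \<open>Unbiased vectors and mutually unbiased bases\<close>

definition sqnorm :: "nat \<Rightarrow> complex vec \<Rightarrow> real" where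
  "sqnorm n v = (\<Sum>i<n. (cmod (v $ i))\<^sup>2)"

lemma cinner_self: "cinner n v v = of_real (sqnorm n v)"
  by (simp add: cinner_eq_l2_inner l2_inner_self sqnorm_def)

lemma sqnorm_nonneg: "0 \<le> sqnorm n v"
  by (simp add: sqnorm_def sum_nonneg)

definition traceless_proj :: "nat \<Rightarrow> complex vec \<Rightarrow> nat \<times> nat \<Rightarrow> complex" where
  "traceless_proj d u = (\<lambda>(r, s). u $ r * cnj (u $ s) - of_bool (r = s) * cinner d u u / of_nat d)"

lemma l2_inner_traceless_proj:
  assumes "0 < d"
  shows "l2_inner ({..<d} \<times> {..<d}) (traceless_proj d u) (traceless_proj d v)
    = of_real ((cmod (cinner d u v))\<^sup>2 - sqnorm d u * sqnorm d v / d)"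
proof -
  define a :: complex where "a = of_real (sqnorm d u / d)"
  define b :: complex where "b = of_real (sqnorm d v / d)"
  have entry: "cnj (traceless_proj d u (r, s)) * traceless_proj d v (r, s)
      = (cnj (u $ r) * v $ r) * cnj (cnj (u $ s) * v $ s)
        - (if r = s then cnj (u $ r) * u $ r * b + a * cnj (cnj (v $ r) * v $ r) - a * b else 0)" for r s
    by (cases "r = s") (simp_all add: traceless_proj_def cinner_self a_def b_def algebra_simps)
  have "l2_inner ({..<d} \<times> {..<d}) (traceless_proj d u) (traceless_proj d v)
      = (\<Sum>r<d. \<Sum>s<d. cnj (traceless_proj d u (r, s)) * traceless_proj d v (r, s))"
    by (simp add: l2_inner_def sum.cartesian_product)
  also have "\<dots> = (\<Sum>r<d. \<Sum>s<d. (cnj (u $ r) * v $ r) * cnj (cnj (u $ s) * v $ s))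
        - (\<Sum>r<d. cnj (u $ r) * u $ r * b + a * cnj (cnj (v $ r) * v $ r) - a * b)"
    by (simp only: entry sum_subtractf) (simp add: sum_subtractf)
  also have "\<dots> = cinner d u v * cnj (cinner d u v) - (cinner d u u * b + a * cnj (cinner d v v) - of_nat d * a * b)"
  proof -
    have "(\<Sum>r<d. \<Sum>s<d. (cnj (u $ r) * v $ r) * cnj (cnj (u $ s) * v $ s)) = cinner d u v * cnj (cinner d u v)"
      by (simp add: cinner_def cnj_sum sum_product)
    moreover have "(\<Sum>r<d. cnj (u $ r) * u $ r * b + a * cnj (cnj (v $ r) * v $ r) - a * b)
        = cinner d u u * b + a * cnj (cinner d v v) - of_nat d * a * b"
      by (simp add: cinner_def cnj_sum sum.distrib sum_subtractf sum_distrib_left sum_distrib_right)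
    ultimately show ?thesis
      by simp
  qed
  also have "\<dots> = of_real ((cmod (cinner d u v))\<^sup>2 - sqnorm d u * sqnorm d v / d)"
    using assms complex_norm_square[of "cinner d u v"]
    by (simp add: cinner_self a_def b_def field_simps del: of_real_power)
  finally show ?thesis .
qed

definition unbiased_family :: "nat \<Rightarrow> nat \<Rightarrow> (nat \<Rightarrow> complex vec) \<Rightarrow> bool" where
  "unbiased_family d K u \<longleftrightarrow> (\<forall>j<K. cinner d (u j) (u j) = 1) \<and>
     (\<forall>i<K. \<forall>j<K. i \<noteq> j \<longrightarrow> (cmod (cinner d (u i) (u j)))\<^sup>2 = 1 / d)"

lemma MUB_family_unbiased_family:
  assumes "MUB_family d K B" and "\<And>l. l < K \<Longrightarrow> k l < d"
  shows "unbiased_family d K (\<lambda>l. B l (k l))"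
  using assms by (simp add: MUB_family_def orthonormal_basis_def unbiased_family_def)

lemma l2_inner_traceless_proj_unbiased:
  assumes "0 < d" and "unbiased_family d K u" and "i < K" and "j < K"
  shows "l2_inner ({..<d} \<times> {..<d}) (traceless_proj d (u i)) (traceless_proj d (u j))
    = (if i = j then of_real (1 - 1 / d) else 0)"
proof -
  have "sqnorm d (u l) = 1" if "l < K" for l
    using assms(2) that by (auto simp: unbiased_family_def cinner_self)
  then show ?thesis
    using assms by (cases "i = j") (simp_all add: unbiased_family_def l2_inner_traceless_proj)
qed

lemma unbiased_overlaps_sum_le:
  assumes "0 < d" and "unbiased_family d K u"
  shows "(\<Sum>j<K. (cmod (cinner d (u j) v))\<^sup>2) \<le> (K + sqrt K * (real d - 1)) / d * sqnorm d v"
proof -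
  let ?I = "{..<d} \<times> {..<d}"
  define A where "A x = (\<Sum>j<K. traceless_proj d (u j) x)" for x
  define N where "N = sqnorm d v"
  define S where "S = (\<Sum>j<K. (cmod (cinner d (u j) v))\<^sup>2 - N / d)"
  have "l2_inner ?I A (traceless_proj d v) = of_real S"
    using assms(2) unfolding A_def l2_inner_sum_left S_def of_real_sum
    by (intro sum.cong refl) (simp add: l2_inner_traceless_proj[OF assms(1)] unbiased_family_def cinner_self N_def)
  then have "(cmod (l2_inner ?I A (traceless_proj d v)))\<^sup>2 = S\<^sup>2"
    by simp
  moreover have "l2_inner ?I A A = (\<Sum>i<K. \<Sum>j<K. if i = j then of_real (1 - 1 / d) else 0)"
    unfolding A_def l2_inner_sum_left l2_inner_sum_right
    by (intro sum.cong refl) (simp add: l2_inner_traceless_proj_unbiased[OF assms])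
  then have "l2_inner ?I A A = of_real (K * (1 - 1 / d))"
    by simp
  then have "(\<Sum>x\<in>?I. (cmod (A x))\<^sup>2) = K * (1 - 1 / d)"
    using l2_inner_self[of ?I A] by (metis of_real_eq_iff)
  moreover have "l2_inner ?I (traceless_proj d v) (traceless_proj d v) = of_real (N\<^sup>2 * (1 - 1 / d))"
    by (simp add: l2_inner_traceless_proj[OF assms(1)] cinner_self N_def power2_eq_square algebra_simps)
  then have "(\<Sum>x\<in>?I. (cmod (traceless_proj d v x))\<^sup>2) = N\<^sup>2 * (1 - 1 / d)"
    using l2_inner_self[of ?I "traceless_proj d v"] by (metis of_real_eq_iff)
  ultimately have "S\<^sup>2 \<le> (K * (1 - 1 / d)) * (N\<^sup>2 * (1 - 1 / d))"
    using l2_inner_Cauchy_Schwarz[of ?I A "traceless_proj d v"] by simp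
  also have "\<dots> = (sqrt K * (1 - 1 / d) * N)\<^sup>2"
    by (simp add: power2_eq_square algebra_simps)
  finally have "S\<^sup>2 \<le> (sqrt K * (1 - 1 / d) * N)\<^sup>2" .
  moreover have "0 \<le> sqrt K * (1 - 1 / d) * N"
    using assms(1) sqnorm_nonneg[of d v] by (simp add: N_def)
  ultimately have "S \<le> sqrt K * (1 - 1 / d) * N"
    by (rule power2_le_imp_le)
  moreover have "S = (\<Sum>j<K. (cmod (cinner d (u j) v))\<^sup>2) - K * N / d"
    by (simp add: S_def sum_subtractf)
  moreover have "(K + sqrt K * (real d - 1)) / d * N = sqrt K * (1 - 1 / d) * N + K * N / d"
    using assms(1) by (simp add: field_simps)
  ultimately show ?thesis
    by (simp add: N_def)
qed

(* The hypothesis 2 <= d is needed: for d = 1 any number of bases is mutually unbiased,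
   so max_MUB 1 is a junk value. *)
lemma MUB_family_le_square:
  assumes "2 \<le> d" and "MUB_family d m B"
  shows "m \<le> d\<^sup>2"
proof -
  define \<alpha> where "\<alpha> = 1 - 1 / real d"
  have "0 < \<alpha>"
    using assms(1) by (simp add: \<alpha>_def)
  have unbiased: "unbiased_family d m (\<lambda>i. B i 0)"
    using assms by (intro MUB_family_unbiased_family) auto
  have "l2_inner ({..<d} \<times> {..<d}) (traceless_proj d (B i 0)) (traceless_proj d (B j 0))
      = (if i = j then of_real \<alpha> else 0)" if "i < m" "j < m" for i j
    using l2_inner_traceless_proj_unbiased[OF _ unbiased that] assms(1) by (simp add: \<alpha>_def)
  then have "m \<le> card ({..<d} \<times> {..<d})"
    by (intro l2_orthogonal_family_card_le[OF _ \<open>0 < \<alpha>\<close>, where F = "\<lambda>i. traceless_proj d (B i 0)"]) auto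
  then show ?thesis
    by (simp add: power2_eq_square)
qed

lemma MUB_family_mono: "MUB_family d m B \<Longrightarrow> K \<le> m \<Longrightarrow> MUB_family d K B"
  by (auto simp: MUB_family_def)

lemma MUB_family_exists:
  assumes "2 \<le> d" and "K \<le> max_MUB d"
  obtains B where "MUB_family d K B"
proof -
  have "\<exists>B. MUB_family d (max_MUB d) B"
    unfolding max_MUB_def
  proof (rule GreatestI_ex_nat)
    show "\<exists>m B. MUB_family d m B"
      by (rule exI[of _ 0]) (simp add: MUB_family_def)
    show "m \<le> d\<^sup>2" if "\<exists>B. MUB_family d m B" for m
      using that MUB_family_le_square[OF assms(1)] by blast
  qed
  then show ?thesis
    using assms(2) MUB_family_mono that by blast
qed

section \<open>Quadratic forms and channels\<close>

definition proj_mat :: "nat \<Rightarrow> complex vec \<Rightarrow> complex mat" where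
  "proj_mat d b = mat d d (\<lambda>(r, s). b $ r * cnj (b $ s))"

definition mat_sum :: "nat \<Rightarrow> 'i set \<Rightarrow> ('i \<Rightarrow> complex mat) \<Rightarrow> complex mat" where
  "mat_sum n J A = mat n n (\<lambda>(r, s). \<Sum>j\<in>J. A j $$ (r, s))"

definition qform :: "nat \<Rightarrow> complex vec \<Rightarrow> complex mat \<Rightarrow> complex" where
  "qform n v A = (\<Sum>p<n. \<Sum>q<n. cnj (v $ p) * A $$ (p, q) * v $ q)"

lemma mat_sum_carrier [simp]: "mat_sum n J A \<in> carrier_mat n n"
  by (simp add: mat_sum_def)

lemma proj_mat_carrier [simp]: "proj_mat d b \<in> carrier_mat d d"
  by (simp add: proj_mat_def)

lemma mat_sum_empty: "mat_sum n {} A = 0\<^sub>m n n"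
  by (auto simp: mat_sum_def)

lemma mat_sum_insert:
  "finite J \<Longrightarrow> j \<notin> J \<Longrightarrow> A j \<in> carrier_mat n n \<Longrightarrow> mat_sum n (insert j J) A = A j + mat_sum n J A"
  by (auto simp: mat_sum_def)

lemma cinner_mult_mat_vec:
  assumes "A \<in> carrier_mat n n" and "v \<in> carrier_vec n"
  shows "cinner n v (A *\<^sub>v v) = qform n v A"
  using assms by (auto simp: cinner_def qform_def scalar_prod_def atLeast0LessThan sum_distrib_left mult.assoc
      intro!: sum.cong)

lemma psd_iff_qform:
  assumes "A \<in> carrier_mat n n"
  shows "psd n A \<longleftrightarrow> (\<forall>v \<in> carrier_vec n. qform n v A \<in> \<real> \<and> 0 \<le> Re (qform n v A))"
  using assms by (simp add: psd_def cinner_mult_mat_vec)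

lemma qform_add:
  "A \<in> carrier_mat n n \<Longrightarrow> B \<in> carrier_mat n n \<Longrightarrow> qform n v (A + B) = qform n v A + qform n v B"
  by (simp add: qform_def algebra_simps sum.distrib)

lemma qform_minus:
  "A \<in> carrier_mat n n \<Longrightarrow> B \<in> carrier_mat n n \<Longrightarrow> qform n v (A - B) = qform n v A - qform n v B"
  by (simp add: qform_def algebra_simps sum_subtractf)

lemma qform_smult: "A \<in> carrier_mat n n \<Longrightarrow> qform n v (c \<cdot>\<^sub>m A) = c * qform n v A"
  by (simp add: qform_def sum_distrib_left mult_ac)

lemma qform_mat_sum: "qform n v (mat_sum n J A) = (\<Sum>j\<in>J. qform n v (A j))"
  by (simp add: qform_def mat_sum_def sum_distrib_left sum_distrib_right sum.swap[of _ J])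

lemma qform_one: "qform n v (1\<^sub>m n) = cinner n v v"
  by (simp add: qform_def cinner_def of_bool_def if_distrib[of "\<lambda>x. _ * x * _"] cong: if_cong)

lemma qform_proj_mat: "qform d v (proj_mat d b) = of_real ((cmod (cinner d b v))\<^sup>2)"
proof -
  have "qform d v (proj_mat d b) = cnj (cinner d b v) * cinner d b v"
    by (simp add: qform_def proj_mat_def cinner_def cnj_sum sum_product mult_ac)
  then show ?thesis
    by (simp add: complex_norm_square mult.commute del: of_real_power)
qed

lemma mtrace_proj_mat: "mtrace d (proj_mat d b) = cinner d b b"
  by (simp add: mtrace_def proj_mat_def cinner_def mult.commute)

lemma psd_identity_minus_unbiased_projections:
  assumes "0 < d" and "unbiased_family d K u"
  shows "psd d (of_real ((K + sqrt K * (real d - 1)) / d) \<cdot>\<^sub>m 1\<^sub>m d - mat_sum d {..<K} (\<lambda>j. proj_mat d (u j)))"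
proof -
  let ?c = "(K + sqrt K * (real d - 1)) / d"
  have qform_eq: "qform d v (of_real ?c \<cdot>\<^sub>m 1\<^sub>m d - mat_sum d {..<K} (\<lambda>j. proj_mat d (u j)))
      = of_real (?c * sqnorm d v - (\<Sum>j<K. (cmod (cinner d (u j) v))\<^sup>2))" for v
    by (simp add: qform_minus qform_smult qform_mat_sum qform_one qform_proj_mat cinner_self)
  show ?thesis
    unfolding psd_iff_qform[OF minus_carrier_mat[OF mat_sum_carrier]] qform_eq
    using unbiased_overlaps_sum_le[OF assms] by simp
qed

lemma qform_Phi_t_proj_mat:
  assumes "0 < d" and "cinner d b b = 1"
  shows "qform d b (Phi_t d t (proj_mat d b)) = of_real (t + (1 - t) / d)"
  using assms by (simp add: Phi_t_def qform_add qform_smult qform_proj_mat qform_one mtrace_proj_mat)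

lemma channel_carrier: "channel n m \<Psi> \<Longrightarrow> X \<in> carrier_mat n n \<Longrightarrow> \<Psi> X \<in> carrier_mat m m"
  by (simp add: channel_def)

lemma channel_smult: "channel n m \<Psi> \<Longrightarrow> X \<in> carrier_mat n n \<Longrightarrow> \<Psi> (c \<cdot>\<^sub>m X) = c \<cdot>\<^sub>m \<Psi> X"
  by (simp add: channel_def)

lemma channel_add:
  "channel n m \<Psi> \<Longrightarrow> X \<in> carrier_mat n n \<Longrightarrow> Y \<in> carrier_mat n n \<Longrightarrow> \<Psi> (X + Y) = \<Psi> X + \<Psi> Y"
  by (simp add: channel_def)

lemma channel_minus:
  assumes "channel n m \<Psi>" and "X \<in> carrier_mat n n" and "Y \<in> carrier_mat n n"
  shows "\<Psi> (X - Y) = \<Psi> X - \<Psi> Y"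
proof -
  have "X - Y = X + (-1) \<cdot>\<^sub>m Y" and "\<Psi> X - \<Psi> Y = \<Psi> X + (-1) \<cdot>\<^sub>m \<Psi> Y"
    using assms channel_carrier[OF assms(1)] by (auto intro!: eq_matI)
  then show ?thesis
    using assms by (simp add: channel_add channel_smult)
qed

lemma channel_zero:
  assumes "channel n m \<Psi>"
  shows "\<Psi> (0\<^sub>m n n) = 0\<^sub>m m m"
proof -
  have "\<Psi> (0\<^sub>m n n) = \<Psi> (0 \<cdot>\<^sub>m 0\<^sub>m n n)"
    by (simp add: smult_zero_mat)
  also have "\<dots> = 0 \<cdot>\<^sub>m \<Psi> (0\<^sub>m n n)"
    by (rule channel_smult[OF assms zero_carrier_mat])
  also have "\<dots> = 0\<^sub>m m m"
    using channel_carrier[OF assms zero_carrier_mat] by (auto intro!: eq_matI)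
  finally show ?thesis .
qed

lemma channel_mat_sum:
  assumes "channel n m \<Psi>" and "finite J" and "\<And>j. j \<in> J \<Longrightarrow> A j \<in> carrier_mat n n"
  shows "\<Psi> (mat_sum n J A) = mat_sum m J (\<lambda>j. \<Psi> (A j))"
  using assms(2,3)
proof (induction J rule: finite_induct)
  case empty
  then show ?case
    using assms(1) by (simp add: mat_sum_empty channel_zero)
next
  case (insert j J)
  then show ?case
    using assms(1) by (simp add: mat_sum_insert channel_add channel_carrier)
qed

lemma channel_psd:
  assumes "channel n m \<Psi>" and "psd n X"
  shows "psd m (\<Psi> X)"
proof -
  have X: "X \<in> carrier_mat n n"
    using assms(2) by (simp add: psd_def)
  have "id_tensor 1 n m \<Psi> X = \<Psi> X"
  proof (rule eq_matI)
    fix i j assume "i < dim_row (\<Psi> X)" "j < dim_col (\<Psi> X)"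
    moreover have "mat n n (\<lambda>(r, s). X $$ (0 * n + r, 0 * n + s)) = X"
      using X by (intro eq_matI) auto
    ultimately show "id_tensor 1 n m \<Psi> X $$ (i, j) = \<Psi> X $$ (i, j)"
      using channel_carrier[OF assms(1) X] by (simp add: id_tensor_def)
  qed (use channel_carrier[OF assms(1) X] in \<open>simp_all add: id_tensor_def\<close>)
  moreover have "psd (1 * m) (id_tensor 1 n m \<Psi> X)"
    using assms unfolding channel_def by (metis mult_1)
  ultimately show ?thesis
    by simp
qed

section \<open>Product bases and marginals\<close>

lemma orthonormal_basis_complete:
  assumes "orthonormal_basis d b" and "r < d" and "s < d"
  shows "(\<Sum>k<d. cnj (b k $ r) * b k $ s) = of_bool (r = s)"
proof -
  define U where "U = mat d d (\<lambda>(r, k). b k $ r)"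
  define V where "V = mat d d (\<lambda>(k, r). cnj (b k $ r))"
  have "V * U = 1\<^sub>m d"
  proof (rule eq_matI)
    fix i j assume "i < dim_row (1\<^sub>m d)" "j < dim_col (1\<^sub>m d)"
    then show "(V * U) $$ (i, j) = 1\<^sub>m d $$ (i, j)"
      using assms(1) by (simp add: U_def V_def scalar_prod_def atLeast0LessThan cinner_def orthonormal_basis_def)
  qed (simp_all add: U_def V_def)
  \<comment> \<open>a one-sided inverse of a square matrix is two-sided\<close>
  then have "U * V = 1\<^sub>m d"
    by (rule mat_mult_left_right_inverse[rotated 2]) (simp_all add: U_def V_def)
  then have "(U * V) $$ (s, r) = 1\<^sub>m d $$ (s, r)"
    by simp
  then show ?thesis
    using assms(2,3) by (simp add: U_def V_def scalar_prod_def atLeast0LessThan mult.commute)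
qed

lemma sum_qform_orthonormal_basis:
  assumes "orthonormal_basis d b"
  shows "(\<Sum>k<d. qform d (b k) A) = mtrace d A"
proof -
  have "(\<Sum>k<d. qform d (b k) A) = (\<Sum>p<d. \<Sum>q<d. A $$ (p, q) * (\<Sum>k<d. cnj (b k $ p) * b k $ q))"
    unfolding qform_def sum_distrib_left
    by (subst sum.swap, rule sum.cong, simp, subst sum.swap) (simp add: mult_ac)
  also have "\<dots> = mtrace d A"
    using assms by (simp add: orthonormal_basis_complete mtrace_def)
  finally show ?thesis .
qed

lemma marginal_index:
  "r < d \<Longrightarrow> s < d \<Longrightarrow>
    marginal d K j M $$ (r, s) = (\<Sum>i\<in>{i. i < d ^ K \<and> digit d j i = r}. M $$ (i, digit_update d j i s))"
  by (simp add: marginal_def digit_update_def)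

lemma mtrace_marginal:
  assumes "0 < d"
  shows "mtrace d (marginal d K j M) = mtrace (d ^ K) M"
  using sum_digit_fibres[OF assms, of "\<lambda>i r. M $$ (i, digit_update d j i r)" "d ^ K" j]
  by (simp add: mtrace_def marginal_index digit_update_digit)

lemma sum_digits_agree_except:
  fixes F :: "nat \<Rightarrow> 'a::comm_semiring_1"
  assumes "0 < d" and "j < K" and "p < d ^ K"
  shows "(\<Sum>q<d ^ K. of_bool (\<forall>l<K. l \<noteq> j \<longrightarrow> digit d l p = digit d l q) * F q)
    = (\<Sum>s<d. F (digit_update d j p s))"
proof -
  have "{q. q < d ^ K \<and> (\<forall>l<K. l \<noteq> j \<longrightarrow> digit d l p = digit d l q)} = digit_update d j p ` {..<d}"
  proof
    show "digit_update d j p ` {..<d} \<subseteq> {q. q < d ^ K \<and> (\<forall>l<K. l \<noteq> j \<longrightarrow> digit d l p = digit d l q)}"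
      using assms by (auto simp: digit_update_less digit_digit_update)
    show "{q. q < d ^ K \<and> (\<forall>l<K. l \<noteq> j \<longrightarrow> digit d l p = digit d l q)} \<subseteq> digit_update d j p ` {..<d}"
    proof
      fix q assume "q \<in> {q. q < d ^ K \<and> (\<forall>l<K. l \<noteq> j \<longrightarrow> digit d l p = digit d l q)}"
      then have "q = digit_update d j p (digit d j q)"
        using eq_digit_update[OF assms(1,3) _ assms(2), of q] by simp
      then show "q \<in> digit_update d j p ` {..<d}"
        using digit_less[OF assms(1)] by blast
    qed
  qed
  moreover have "inj_on (digit_update d j p) {..<d}"
    by (rule inj_on_inverseI[where g = "digit d j"]) (simp add: digit_digit_update assms(1))
  ultimately show ?thesis
    by (simp add: Int_def sum.reindex)
qed

lemma sum_digits_agree_marginal: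
  assumes "0 < d" and "j < K"
  shows "(\<Sum>p<d ^ K. \<Sum>q<d ^ K. of_bool (\<forall>l<K. l \<noteq> j \<longrightarrow> digit d l p = digit d l q)
            * (f (digit d j p) * M $$ (p, q) * g (digit d j q)))
    = (\<Sum>r<d. \<Sum>s<d. f r * marginal d K j M $$ (r, s) * g s)"
proof -
  have "(\<Sum>r<d. \<Sum>s<d. f r * marginal d K j M $$ (r, s) * g s)
      = (\<Sum>r<d. \<Sum>s<d. \<Sum>i\<in>{i. i < d ^ K \<and> digit d j i = r}. f r * M $$ (i, digit_update d j i s) * g s)"
    by (intro sum.cong refl) (simp add: marginal_index sum_distrib_left sum_distrib_right)
  also have "\<dots> = (\<Sum>r<d. \<Sum>i\<in>{i. i < d ^ K \<and> digit d j i = r}. \<Sum>s<d. f r * M $$ (i, digit_update d j i s) * g s)"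
    by (rule sum.cong[OF refl], rule sum.swap)
  also have "\<dots> = (\<Sum>p<d ^ K. \<Sum>s<d. f (digit d j p) * M $$ (p, digit_update d j p s) * g s)"
    by (rule sum_digit_fibres[OF assms(1)])
  also have "\<dots> = (\<Sum>p<d ^ K. \<Sum>q<d ^ K. of_bool (\<forall>l<K. l \<noteq> j \<longrightarrow> digit d l p = digit d l q)
            * (f (digit d j p) * M $$ (p, q) * g (digit d j q)))"
  proof (rule sum.cong[OF refl])
    fix p assume p: "p \<in> {..<d ^ K}"
    have "(\<Sum>q<d ^ K. of_bool (\<forall>l<K. l \<noteq> j \<longrightarrow> digit d l p = digit d l q)
            * (f (digit d j p) * M $$ (p, q) * g (digit d j q)))
        = (\<Sum>s<d. f (digit d j p) * M $$ (p, digit_update d j p s) * g (digit d j (digit_update d j p s)))"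
      using p by (intro sum_digits_agree_except[OF assms]) simp
    also have "\<dots> = (\<Sum>s<d. f (digit d j p) * M $$ (p, digit_update d j p s) * g s)"
      using assms(1) by (intro sum.cong refl) (simp add: digit_digit_update)
    finally show "(\<Sum>s<d. f (digit d j p) * M $$ (p, digit_update d j p s) * g s)
        = (\<Sum>q<d ^ K. of_bool (\<forall>l<K. l \<noteq> j \<longrightarrow> digit d l p = digit d l q)
            * (f (digit d j p) * M $$ (p, q) * g (digit d j q)))" ..
  qed
  finally show ?thesis ..
qed

lemma prod_of_bool: "finite A \<Longrightarrow> (\<Prod>x\<in>A. of_bool (P x) :: 'a::comm_semiring_1) = of_bool (\<forall>x\<in>A. P x)"
  by (induction A rule: finite_induct) auto

(* B 0 (digit d 0 i) \<otimes> ... \<otimes> B (K - 1) (digit d (K - 1) i), in the digit encoding of the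
   tensor power that marginal uses. *)
definition prod_vec :: "nat \<Rightarrow> nat \<Rightarrow> (nat \<Rightarrow> nat \<Rightarrow> complex vec) \<Rightarrow> nat \<Rightarrow> complex vec" where
  "prod_vec d K B i = vec (d ^ K) (\<lambda>p. \<Prod>l<K. B l (digit d l i) $ digit d l p)"

lemma prod_vec_carrier [simp]: "prod_vec d K B i \<in> carrier_vec (d ^ K)"
  by (simp add: prod_vec_def)

lemma sum_fibre_prod_vec:
  assumes "0 < d" and "j < K" and "k < d" and onb: "\<And>l. l < K \<Longrightarrow> orthonormal_basis d (B l)"
    and "p < d ^ K" and "q < d ^ K"
  shows "(\<Sum>i\<in>{i. i < d ^ K \<and> digit d j i = k}. cnj (prod_vec d K B i $ p) * prod_vec d K B i $ q)
    = of_bool (\<forall>l<K. l \<noteq> j \<longrightarrow> digit d l p = digit d l q) * (cnj (B j k $ digit d j p) * B j k $ digit d j q)"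
proof -
  define g where "g l x = of_bool (l \<noteq> j \<or> x = k) * (cnj (B l x $ digit d l p) * B l x $ digit d l q)" for l x
  have "(\<Prod>l<K. g l (digit d l i)) = of_bool (digit d j i = k) * (cnj (prod_vec d K B i $ p) * prod_vec d K B i $ q)"
    for i
  proof -
    have "(\<Prod>l<K. of_bool (l \<noteq> j \<or> digit d l i = k) :: complex) = of_bool (digit d j i = k)"
      using assms(2) by (auto simp: prod_of_bool)
    then show ?thesis
      using assms(5,6) by (simp add: g_def prod.distrib prod_vec_def cnj_prod)
  qed
  then have "(\<Sum>i\<in>{i. i < d ^ K \<and> digit d j i = k}. cnj (prod_vec d K B i $ p) * prod_vec d K B i $ q)
      = (\<Sum>i<d ^ K. \<Prod>l<K. g l (digit d l i))"
    by (simp add: Int_def conj_commute)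
  also have "\<dots> = (\<Prod>l<K. \<Sum>x<d. g l x)"
    by (rule sum_prod_digits)
  also have "\<dots> = (\<Prod>l<K. if l = j then cnj (B j k $ digit d j p) * B j k $ digit d j q
                       else of_bool (digit d l p = digit d l q))"
    using assms(1,3) onb by (intro prod.cong refl) (simp add: g_def orthonormal_basis_complete digit_less)
  also have "\<dots> = cnj (B j k $ digit d j p) * B j k $ digit d j q
                 * (\<Prod>l\<in>{..<K} - {j}. of_bool (digit d l p = digit d l q))"
    using assms(2) by (simp add: prod.remove)
  also have "\<dots> = of_bool (\<forall>l<K. l \<noteq> j \<longrightarrow> digit d l p = digit d l q) * (cnj (B j k $ digit d j p) * B j k $ digit d j q)"
    by (auto simp: prod_of_bool)
  finally show ?thesis .
qed

lemma sum_fibre_qform_prod_vec: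
  assumes "0 < d" and "j < K" and "k < d" and onb: "\<And>l. l < K \<Longrightarrow> orthonormal_basis d (B l)"
  shows "(\<Sum>i\<in>{i. i < d ^ K \<and> digit d j i = k}. qform (d ^ K) (prod_vec d K B i) M)
    = qform d (B j k) (marginal d K j M)"
proof -
  let ?F = "{i. i < d ^ K \<and> digit d j i = k}" and ?e = "prod_vec d K B"
  have "(\<Sum>i\<in>?F. qform (d ^ K) (?e i) M)
      = (\<Sum>p<d ^ K. \<Sum>q<d ^ K. M $$ (p, q) * (\<Sum>i\<in>?F. cnj (?e i $ p) * ?e i $ q))"
    unfolding qform_def sum_distrib_left
    by (subst sum.swap, rule sum.cong, simp, subst sum.swap) (simp add: mult_ac)
  also have "\<dots> = (\<Sum>p<d ^ K. \<Sum>q<d ^ K. of_bool (\<forall>l<K. l \<noteq> j \<longrightarrow> digit d l p = digit d l q)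
      * (cnj (B j k $ digit d j p) * M $$ (p, q) * B j k $ digit d j q))"
    by (intro sum.cong refl) (simp only: sum_fibre_prod_vec[OF assms] lessThan_iff, simp add: mult_ac)
  also have "\<dots> = qform d (B j k) (marginal d K j M)"
    unfolding qform_def by (rule sum_digits_agree_marginal[OF assms(1,2)])
  finally show ?thesis .
qed

lemma sum_qform_prod_vec_digit:
  assumes "0 < d" and "j < K" and "\<And>l. l < K \<Longrightarrow> orthonormal_basis d (B l)"
  shows "(\<Sum>i<d ^ K. qform (d ^ K) (prod_vec d K B i) (A (digit d j i)))
    = (\<Sum>k<d. qform d (B j k) (marginal d K j (A k)))"
  using sum_digit_fibres[OF assms(1), of "\<lambda>i k. qform (d ^ K) (prod_vec d K B i) (A k)" "d ^ K" j]
    sum_fibre_qform_prod_vec[OF assms(1,2) _ assms(3)]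
  by simp

lemma sum_qform_prod_vec:
  assumes "0 < d" and "0 < K" and "\<And>l. l < K \<Longrightarrow> orthonormal_basis d (B l)"
  shows "(\<Sum>i<d ^ K. qform (d ^ K) (prod_vec d K B i) M) = mtrace (d ^ K) M"
  using sum_qform_prod_vec_digit[OF assms(1,2,3), where A = "\<lambda>_. M"] assms
    sum_qform_orthonormal_basis mtrace_marginal
  by simp

section \<open>Incompatibility of copies of \<Phi>_t\<close>

lemma sum_qform_prod_vec_Phi_t_marginal:
  assumes "0 < d" and "j < K" and onb: "\<And>l. l < K \<Longrightarrow> orthonormal_basis d (B l)"
    and "\<And>X. X \<in> carrier_mat d d \<Longrightarrow> marginal d K j (\<Psi> X) = Phi_t d t X"
  shows "(\<Sum>i<d ^ K. qform (d ^ K) (prod_vec d K B i) (\<Psi> (proj_mat d (B j (digit d j i)))))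
    = of_real (d * t + 1 - t)"
proof -
  have "(\<Sum>i<d ^ K. qform (d ^ K) (prod_vec d K B i) (\<Psi> (proj_mat d (B j (digit d j i)))))
      = (\<Sum>k<d. qform d (B j k) (marginal d K j (\<Psi> (proj_mat d (B j k)))))"
    by (rule sum_qform_prod_vec_digit[OF assms(1,2) onb])
  also have "\<dots> = (\<Sum>k<d. qform d (B j k) (Phi_t d t (proj_mat d (B j k))))"
    using assms(4) by simp
  also have "\<dots> = of_real (d * t + 1 - t)"
    using assms(1,2) onb by (simp add: orthonormal_basis_def qform_Phi_t_proj_mat field_simps)
  finally show ?thesis .
qed

lemma sum_qform_prod_vec_joint_channel:
  assumes "0 < d" and "0 < K" and onb: "\<And>l. l < K \<Longrightarrow> orthonormal_basis d (B l)"
    and ch: "channel d (d ^ K) \<Psi>"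
    and marg: "\<And>j X. j < K \<Longrightarrow> X \<in> carrier_mat d d \<Longrightarrow> marginal d K j (\<Psi> X) = Phi_t d t X"
  shows "(\<Sum>i<d ^ K. qform (d ^ K) (prod_vec d K B i)
            (\<Psi> (of_real c \<cdot>\<^sub>m 1\<^sub>m d - mat_sum d {..<K} (\<lambda>j. proj_mat d (B j (digit d j i))))))
    = of_real (c * d - K * (d * t + 1 - t))"
proof -
  let ?n = "d ^ K" and ?e = "prod_vec d K B" and ?P = "\<lambda>i j. proj_mat d (B j (digit d j i))"
  have "\<Psi> (of_real c \<cdot>\<^sub>m 1\<^sub>m d - mat_sum d {..<K} (?P i))
      = of_real c \<cdot>\<^sub>m \<Psi> (1\<^sub>m d) - mat_sum ?n {..<K} (\<lambda>j. \<Psi> (?P i j))" for i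
    using ch by (simp add: channel_minus channel_smult channel_mat_sum)
  then have "(\<Sum>i<?n. qform ?n (?e i) (\<Psi> (of_real c \<cdot>\<^sub>m 1\<^sub>m d - mat_sum d {..<K} (?P i))))
      = of_real c * (\<Sum>i<?n. qform ?n (?e i) (\<Psi> (1\<^sub>m d))) - (\<Sum>j<K. \<Sum>i<?n. qform ?n (?e i) (\<Psi> (?P i j)))"
    by (simp add: qform_minus qform_smult qform_mat_sum channel_carrier[OF ch]
        sum_subtractf sum_distrib_left sum.swap[of _ "{..<K}"])
  also have "(\<Sum>i<?n. qform ?n (?e i) (\<Psi> (1\<^sub>m d))) = d"
    using assms(1,2) onb ch by (simp add: sum_qform_prod_vec channel_def mtrace_def)
  also have "(\<Sum>j<K. \<Sum>i<?n. qform ?n (?e i) (\<Psi> (?P i j))) = K * (d * t + 1 - t)"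
    using assms(1) onb marg by (simp add: sum_qform_prod_vec_Phi_t_marginal)
  finally show ?thesis
    by simp
qed

lemma joint_channel_of_Phi_t_le:
  assumes "2 \<le> d" and "0 < K" and "MUB_family d K B" and ch: "channel d (d ^ K) \<Psi>"
    and "\<And>j X. j < K \<Longrightarrow> X \<in> carrier_mat d d \<Longrightarrow> marginal d K j (\<Psi> X) = Phi_t d t X"
  shows "t \<le> 1 / sqrt K"
proof -
  have "0 < d"
    using assms(1) by simp
  define c where "c = (K + sqrt K * (real d - 1)) / d"
  define Y where "Y i = of_real c \<cdot>\<^sub>m 1\<^sub>m d - mat_sum d {..<K} (\<lambda>j. proj_mat d (B j (digit d j i)))" for i
  have "Y i \<in> carrier_mat d d" for i
    unfolding Y_def by (rule minus_carrier_mat[OF mat_sum_carrier])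
  moreover have "psd d (Y i)" for i
    unfolding Y_def c_def
    using MUB_family_unbiased_family[OF assms(3)] \<open>0 < d\<close>
    by (intro psd_identity_minus_unbiased_projections) (auto simp: digit_less)
  ultimately have "0 \<le> Re (qform (d ^ K) (prod_vec d K B i) (\<Psi> (Y i)))" for i
    using channel_psd[OF ch] psd_iff_qform[OF channel_carrier[OF ch]] prod_vec_carrier by blast
  then have "0 \<le> Re (\<Sum>i<d ^ K. qform (d ^ K) (prod_vec d K B i) (\<Psi> (Y i)))"
    by (simp add: sum_nonneg)
  also have "(\<Sum>i<d ^ K. qform (d ^ K) (prod_vec d K B i) (\<Psi> (Y i))) = of_real (c * d - K * (d * t + 1 - t))"
    unfolding Y_def using \<open>0 < d\<close> assms(2-5)
    by (intro sum_qform_prod_vec_joint_channel) (auto simp: MUB_family_def)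
  also have "c * d - K * (d * t + 1 - t) = (real d - 1) * (sqrt K - K * t)"
    using \<open>0 < d\<close> by (simp add: c_def field_simps)
  finally have "K * t \<le> sqrt K"
    using assms(1) by (simp add: zero_le_mult_iff)
  then have "sqrt K * (sqrt K * t) \<le> sqrt K * 1"
    by (simp add: mult.assoc[symmetric])
  then have "sqrt K * t \<le> 1"
    using assms(2) by simp
  then show ?thesis
    using assms(2) by (simp add: field_simps)
qed

lemma not_compatible_Phi_t:
  assumes "2 \<le> d" and "0 < K" and "MUB_family d K B" and "1 / sqrt K < t" and "card S = K"
  shows "\<not> compatible d (\<lambda>i. Phi_t d t) S"
proof
  assume "compatible d (\<lambda>i. Phi_t d t) S"
  then obtain \<Psi> where "channel d (d ^ K) \<Psi>"
    and "\<And>j X. j < K \<Longrightarrow> X \<in> carrier_mat d d \<Longrightarrow> marginal d K j (\<Psi> X) = Phi_t d t X"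
    using assms(5) by (auto simp: compatible_def)
  then have "t \<le> 1 / sqrt K"
    by (rule joint_channel_of_Phi_t_le[OF assms(1-3)])
  with assms(4) show False
    by simp
qed

theorem corollary7p3:
  fixes d N K :: nat and t :: real
  assumes "d \<ge> 2" and "0 < N" and "0 < K"
    and "K \<le> min N (max_MUB d)"
    and "t > 1 / sqrt (real K)"
  shows "NK_strongly_incompatible d N K (\<lambda>i. Phi_t d t)
       \<and> NK_incompatible d N K (\<lambda>i. Phi_t d t)"
proof -
  obtain B where "MUB_family d K B"
    using MUB_family_exists[OF assms(1)] assms(4) by auto
  then have "\<not> compatible d (\<lambda>i. Phi_t d t) S" if "card S = K" for S
    using not_compatible_Phi_t[OF assms(1,3)] assms(5) that by blast
  moreover have "{..<K} \<subseteq> {..<N}"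
    using assms(4) by auto
  ultimately show ?thesis
    unfolding NK_strongly_incompatible_def NK_incompatible_def by (metis card_lessThan)
qed

end
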